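(* If $F$ is regular, i.e., $r''$ is bounded above on some interval $(1-\delta,1)$ with $\delta\in(0,1)$, then the limit $\lim_{v\to 1^-} r'(v)$ exists in $[-\infty,\infty)$ and lies in $[-\infty,0]$.
   Context: Let $F$ be a probability distribution on $[0,1]$ with support $[0,1]$ admitting a twice continuously differentiable density $f:(0,1)\to\mathbb{R}_{>0}$, and define the inverse hazard rate $r(v)=(1-F(v))/f(v)$ on $(0,1)$. *)

theory Defs
  imports "HOL-Analysis.Analysis"
begin

definition inv_hazard :: "(real \<Rightarrow> real) \<Rightarrow> (real \<Rightarrow> real) \<Rightarrow> real \<Rightarrow> real" where
  "inv_hazard F f v = (1 - F v) / f v"

definition C2_on_open_unit :: "(real \<Rightarrow> real) \<Rightarrow> bool" where
  "C2_on_open_unit f \<longleftrightarrow>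
     (\<forall>x\<in>{0<..<1}. f differentiable (at x)) \<and>
     (\<forall>x\<in>{0<..<1}. (deriv f) differentiable (at x)) \<and>
     continuous_on {0<..<1} (deriv (deriv f))"

definition regular_dist :: "(real \<Rightarrow> real) \<Rightarrow> (real \<Rightarrow> real) \<Rightarrow> bool" where
  "regular_dist F f \<longleftrightarrow>
     (\<exists>\<delta>. 0 < \<delta> \<and> \<delta> < 1 \<and>
        (\<exists>M. \<forall>v\<in>{1 - \<delta><..<1}. deriv (deriv (inv_hazard F f)) v \<le> M))"

end

theory Submission
  imports Defs
begin

text \<open>
  Because r'' is bounded above by some M near 1, the function r'(v) - M v is antitone there, so
  r' has a left limit at 1 in the extended reals. If this limit were positive, r would
  eventually be increasing and hence bounded below by some a > 0. The survival function
  G = 1 - F would then satisfy G + a G' \<ge> 0, so that G(v) exp(v/a) is nondecreasing,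
  which is impossible since G is positive on (0,1) and G(1) = 0.
\<close>

lemma ereal_tendsto_at_left_of_deriv_bounded_above:
  fixes g g' :: "real \<Rightarrow> real"
  assumes "a < b"
    and g': "\<And>x. a < x \<Longrightarrow> x < b \<Longrightarrow> (g has_real_derivative g' x) (at x)"
    and bound: "\<And>x. a < x \<Longrightarrow> x < b \<Longrightarrow> g' x \<le> M"
  shows "\<exists>L. ((\<lambda>x. ereal (g x)) \<longlongrightarrow> L) (at_left b)"
proof -
  define k where "k x = ereal (M * x - g x)" for x
  have k_mono: "k x \<le> k y" if "x \<in> {a<..}" "y \<in> {a<..}" "y < b" "x \<le> y" for x y
  proof -
    have "M * x - g x \<le> M * y - g y"
    proof (rule deriv_nonneg_imp_mono[of x y _ "\<lambda>t. M - g' t"])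
      fix t assume "t \<in> {x..y}"
      with that have t: "a < t" "t < b" by auto
      show "((\<lambda>t. M * t - g t) has_real_derivative M - g' t) (at t)"
        using g'[OF t] by (auto intro!: derivative_eq_intros)
      show "0 \<le> M - g' t" using bound[OF t] by simp
    qed (use that in auto)
    then show ?thesis by (simp add: k_def)
  qed
  have "at b within ({..<b} \<inter> {a<..}) = at_left b"
    by (rule at_within_nhd[of _ "{a<..}"]) (use \<open>a < b\<close> in auto)
  with Lim_left_bound[of "{a<..}" b k \<infinity>, OF k_mono]
  obtain S where "(k \<longlongrightarrow> S) (at_left b)" by auto
  then have "((\<lambda>x. ereal (M * x) + - k x) \<longlongrightarrow> ereal (M * b) + - S) (at_left b)"
    by (intro tendsto_add_ereal_general2 tendsto_intros) auto
  then show ?thesis by (auto simp: k_def)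
qed

lemma exp_decay_lower_bound:
  fixes G G' :: "real \<Rightarrow> real"
  assumes "x \<le> y" "0 < a" "continuous_on {x..y} G"
    and G': "\<And>t. x < t \<Longrightarrow> t < y \<Longrightarrow> (G has_real_derivative G' t) (at t)"
    and decay: "\<And>t. x < t \<Longrightarrow> t < y \<Longrightarrow> 0 \<le> G t + a * G' t"
  shows "G x * exp ((x - y) / a) \<le> G y"
proof -
  have "G x * exp (x / a) \<le> G y * exp (y / a)"
  proof (rule DERIV_nonneg_imp_increasing_open[of x y "\<lambda>t. G t * exp (t / a)"])
    show "continuous_on {x..y} (\<lambda>t. G t * exp (t / a))"
      using \<open>0 < a\<close> by (intro continuous_intros assms(3)) auto
    fix t assume t: "x < t" "t < y"
    have "((\<lambda>t. G t * exp (t / a)) has_real_derivative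
            exp (t / a) / a * (G t + a * G' t)) (at t)"
      using G'[OF t] \<open>0 < a\<close> by (auto intro!: derivative_eq_intros simp: field_simps)
    moreover have "0 \<le> exp (t / a) / a * (G t + a * G' t)"
      using decay[OF t] \<open>0 < a\<close> by simp
    ultimately show "\<exists>d. ((\<lambda>t. G t * exp (t / a)) has_real_derivative d) (at t) \<and> 0 \<le> d"
      by blast
  qed fact
  then show ?thesis
    by (simp add: diff_divide_distrib exp_diff field_simps)
qed

locale unit_density =
  fixes F f :: "real \<Rightarrow> real"
  assumes dens_pos: "\<forall>v\<in>{0<..<1}. f v > 0"
    and dens_C2: "C2_on_open_unit f"
    and dens_int: "(f has_integral 1) {0..1}"
    and cdf: "\<forall>v\<in>{0..1}. F v = integral {0..v} f"
begin

lemma cdf_continuous: "continuous_on {0..1} F"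
proof -
  have "f integrable_on {0..1}"
    using dens_int by blast
  then show ?thesis
    by (rule continuous_on_eq[OF indefinite_integral_continuous_1]) (use cdf in simp)
qed

lemma cdf_at_1: "F 1 = 1"
  using cdf dens_int by (simp add: integral_unique)

lemma density_has_derivative:
  "v \<in> {0<..<1} \<Longrightarrow> (f has_real_derivative deriv f v) (at v)"
  using dens_C2 by (simp add: C2_on_open_unit_def DERIV_deriv_iff_real_differentiable)

lemma deriv_density_has_derivative:
  "v \<in> {0<..<1} \<Longrightarrow> (deriv f has_real_derivative deriv (deriv f) v) (at v)"
  using dens_C2 by (simp add: C2_on_open_unit_def DERIV_deriv_iff_real_differentiable)

lemma cdf_has_derivative:
  assumes v: "v \<in> {0<..<1}"
  shows "(F has_real_derivative f v) (at v)"
proof -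
  have "continuous (at v within {0..1}) f"
    using DERIV_isCont[OF density_has_derivative[OF v]] continuous_at_imp_continuous_at_within
    by blast
  with integral_has_vector_derivative_continuous_at[of f 0 1 v "{}"] dens_int v
  have "((\<lambda>u. integral {0..u} f) has_vector_derivative f v) (at v within {0..1})"
    by auto
  moreover have "at v within {0..1} = at v"
    using v by (intro at_within_interior) auto
  ultimately have "((\<lambda>u. integral {0..u} f) has_real_derivative f v) (at v)"
    by (simp add: has_real_derivative_iff_has_vector_derivative)
  then show ?thesis
    by (rule has_field_derivative_transform_within_open[OF _ open_greaterThanLessThan v])
       (use cdf in auto)
qed

lemma cdf_less_1:
  assumes v: "v \<in> {0<..<1}"
  shows "F v < 1"
proof -
  have "continuous_on {v..1} F"
    using v by (intro continuous_on_subset[OF cdf_continuous]) auto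
  moreover have "F differentiable (at x)" if "v < x" "x < 1" for x
    using cdf_has_derivative[of x] that v real_differentiable_def by auto
  ultimately obtain l z where z: "v < z" "z < 1" "(F has_real_derivative l) (at z)"
    and mvt: "F 1 - F v = (1 - v) * l"
    using MVT[of v 1 F] v by auto
  have "l = f z"
    using z v by (intro DERIV_unique[OF z(3) cdf_has_derivative]) auto
  then have "0 < (1 - v) * l"
    using z v dens_pos by auto
  with mvt cdf_at_1 show ?thesis by simp
qed

lemma inv_hazard_pos: "v \<in> {0<..<1} \<Longrightarrow> 0 < inv_hazard F f v"
  using cdf_less_1 dens_pos by (simp add: inv_hazard_def)

lemma inv_hazard_has_derivative:
  assumes v: "v \<in> {0<..<1}"
  shows "(inv_hazard F f has_real_derivative
           (- f v * f v - (1 - F v) * deriv f v) / (f v * f v)) (at v)"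
proof -
  have "f v \<noteq> 0" using dens_pos v by force
  have "((\<lambda>v. 1 - F v) has_real_derivative - f v) (at v)"
    using DERIV_diff[OF DERIV_const cdf_has_derivative[OF v]] by simp
  from DERIV_divide[OF this density_has_derivative[OF v] \<open>f v \<noteq> 0\<close>]
  show ?thesis unfolding inv_hazard_def[abs_def] .
qed

lemma inv_hazard_has_derivative_deriv:
  assumes v: "v \<in> {0<..<1}"
  shows "(inv_hazard F f has_real_derivative deriv (inv_hazard F f) v) (at v)"
  using inv_hazard_has_derivative[OF v] DERIV_imp_deriv[OF inv_hazard_has_derivative[OF v]]
  by (simp only:)

lemma deriv_inv_hazard_has_derivative:
  assumes v: "v \<in> {0<..<1}"
  shows "(deriv (inv_hazard F f) has_real_derivative deriv (deriv (inv_hazard F f)) v) (at v)"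
proof -
  define h where "h u = (- f u * f u - (1 - F u) * deriv f u) / (f u * f u)" for u
  have "f v \<noteq> 0" using dens_pos v by force
  have "f differentiable (at v)" "deriv f differentiable (at v)" "F differentiable (at v)"
    using density_has_derivative[OF v] deriv_density_has_derivative[OF v]
      cdf_has_derivative[OF v] real_differentiable_def by blast+
  then have "h differentiable (at v)"
    unfolding h_def using \<open>f v \<noteq> 0\<close> by (auto intro!: derivative_intros)
  then have "(h has_real_derivative deriv h v) (at v)"
    by (simp add: DERIV_deriv_iff_real_differentiable)
  moreover have "h u = deriv (inv_hazard F f) u" if "u \<in> {0<..<1}" for u
    using DERIV_imp_deriv[OF inv_hazard_has_derivative[OF that]] by (simp add: h_def)
  ultimately have "(deriv (inv_hazard F f) has_real_derivative deriv h v) (at v)"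
    by (rule has_field_derivative_transform_within_open[OF _ open_greaterThanLessThan v])
  then show ?thesis
    using DERIV_imp_deriv by metis
qed

lemma deriv_inv_hazard_limit_nonpos:
  assumes lim: "((\<lambda>v. ereal (deriv (inv_hazard F f) v)) \<longlongrightarrow> L) (at_left 1)"
  shows "L \<le> 0"
proof (rule ccontr)
  assume "\<not> L \<le> 0"
  then have "eventually (\<lambda>v. 0 < deriv (inv_hazard F f) v) (at_left 1)"
    using order_tendstoD(1)[OF lim, of 0] by (simp add: zero_ereal_def)
  then obtain b where "b < 1" and b: "\<And>v. b < v \<Longrightarrow> v < 1 \<Longrightarrow> 0 < deriv (inv_hazard F f) v"
    by (auto simp: eventually_at_left_field)
  define v\<^sub>1 where "v\<^sub>1 = (max b 0 + 1) / 2"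
  have v\<^sub>1: "v\<^sub>1 \<in> {0<..<1}" "b < v\<^sub>1"
    using \<open>b < 1\<close> by (auto simp: v\<^sub>1_def)
  define a where "a = inv_hazard F f v\<^sub>1"
  have "0 < a"
    using inv_hazard_pos[OF v\<^sub>1(1)] by (simp add: a_def)
  have survival_decay: "0 \<le> (1 - F t) + a * - f t" if t: "v\<^sub>1 < t" "t < 1" for t
  proof -
    have "a \<le> inv_hazard F f t"
      unfolding a_def
      by (rule deriv_nonneg_imp_mono[OF inv_hazard_has_derivative_deriv less_imp_le[OF b]])
         (use t v\<^sub>1 in auto)
    moreover have "0 < f t" using t v\<^sub>1 dens_pos by auto
    ultimately show ?thesis by (simp add: inv_hazard_def field_simps)
  qed
  have "(1 - F v\<^sub>1) * exp ((v\<^sub>1 - 1) / a) \<le> 1 - F 1"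
  proof (rule exp_decay_lower_bound[OF _ \<open>0 < a\<close> _ _ survival_decay])
    show "continuous_on {v\<^sub>1..1} (\<lambda>v. 1 - F v)"
      using v\<^sub>1 by (intro continuous_intros continuous_on_subset[OF cdf_continuous]) auto
    fix t assume "v\<^sub>1 < t" "t < 1"
    with v\<^sub>1 show "((\<lambda>v. 1 - F v) has_real_derivative - f t) (at t)"
      using DERIV_diff[OF DERIV_const cdf_has_derivative] by force
  qed (use v\<^sub>1 in auto)
  moreover have "0 < (1 - F v\<^sub>1) * exp ((v\<^sub>1 - 1) / a)"
    using cdf_less_1[OF v\<^sub>1(1)] by simp
  ultimately show False
    using cdf_at_1 by simp
qed

end

theorem lemma6:
  fixes F f :: "real \<Rightarrow> real"
  assumes dens_pos: "\<forall>v\<in>{0<..<1}. f v > 0"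
    and dens_C2: "C2_on_open_unit f"
    and dens_int: "(f has_integral 1) {0..1}"
    and cdf: "\<forall>v\<in>{0..1}. F v = integral {0..v} f"
    and reg: "regular_dist F f"
  shows "\<exists>L::ereal. ((\<lambda>v. ereal (deriv (inv_hazard F f) v)) \<longlongrightarrow> L) (at_left 1)
           \<and> L \<le> 0"
proof -
  interpret unit_density F f
    using dens_pos dens_C2 dens_int cdf by unfold_locales
  from reg obtain \<delta> M where \<delta>: "0 < \<delta>" "\<delta> < 1"
    and bound: "\<forall>v\<in>{1 - \<delta><..<1}. deriv (deriv (inv_hazard F f)) v \<le> M"
    unfolding regular_dist_def by blast
  have "\<exists>L. ((\<lambda>v. ereal (deriv (inv_hazard F f) v)) \<longlongrightarrow> L) (at_left 1)"
  proof (rule ereal_tendsto_at_left_of_deriv_bounded_above[where M = M])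
    fix x assume x: "1 - \<delta> < x" "x < 1"
    then show "(deriv (inv_hazard F f) has_real_derivative deriv (deriv (inv_hazard F f)) x) (at x)"
      using \<delta> deriv_inv_hazard_has_derivative by auto
    show "deriv (deriv (inv_hazard F f)) x \<le> M"
      using x bound by auto
  qed (use \<delta> in auto)
  then show ?thesis
    using deriv_inv_hazard_limit_nonpos by blast
qed

end
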